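(* Let $p$ be a prime, $m\ge1$, $q=p^m$, $\omega$ a primitive $q$-th root of unity in $\mathbb C$, and $U_q$ the set of $q$-th roots of unity. Let $k,r\ge0$, and for $t\in[k]$ let $\alpha_t,\alpha_{t,1},\dots,\alpha_{t,r}\in\{0,1,\dots,q-1\}$. Let $\mathcal L'$ be the CSP instance with variables $x_1,\dots,x_k,y_1,\dots,y_r$, all with domain $U_q$, and constraints $x_t=\omega^{\alpha_t}y_1^{\alpha_{t,1}}\cdots y_r^{\alpha_{t,r}}$ for $t\in[k]$. Let $$G'=\{x_t-\omega^{\alpha_t}y_1^{\alpha_{t,1}}\cdots y_r^{\alpha_{t,r}}:t\in[k]\}\cup\{y_j^{q}-1:j\in[r]\}\subseteq\mathbb C[x_1,\dots,x_k,y_1,\dots,y_r].$$ Then $G'$ is a Gröbner basis, with respect to the lexicographic order with $x_1\succ\dots\succ x_k\succ y_1\succ\dots\succ y_r$, of the ideal $\mathtt I(\mathcal L')=\mathbf I(\mathsf{Sol}(\mathcal L'))$; in particular $\langle G'\rangle=\mathbf I(\mathsf{Sol}(\mathcal L'))$.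
   Context: $\mathsf{Sol}(\mathcal L')\subseteq\mathbb C^{k+r}$ is the set of points with all coordinates in $U_q$ satisfying the constraints. $\mathtt I(\mathcal L')$ is the ideal generated by the domain polynomials $z^q-1$ for every variable $z$ and the constraint polynomials; $\mathbf I(S)$ denotes the ideal of all polynomials vanishing on the set $S$. A Gröbner basis of an ideal $I$ for a monomial order is a finite subset $G\subseteq I$ with $\langle\mathrm{LT}(g):g\in G\rangle=\langle\mathrm{LT}(I)\rangle$. Lexicographic order: $x^\alpha\succ x^\beta$ iff the leftmost nonzero entry of $\alpha-\beta$ is positive. *)

theory Defs
  imports Complex_Main "HOL-Library.Poly_Mapping" "HOL-Computational_Algebra.Primes"
begin

text \<open>Multivariate polynomials over the complex numbers in variables indexed by nat:
  a monomial is a finitely supported exponent vector (a poly_mapping from nat to nat), a polynomial is a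
  finitely supported map from monomials to coefficients (convolution product).\<close>

type_synonym mon = "nat \<Rightarrow>\<^sub>0 nat"
type_synonym mpoly = "mon \<Rightarrow>\<^sub>0 complex"

definition Const :: "complex \<Rightarrow> mpoly" where
  "Const c = Poly_Mapping.single 0 c"

definition Var :: "nat \<Rightarrow> mpoly" where
  "Var i = Poly_Mapping.single (Poly_Mapping.single i 1) 1"

definition vars_in :: "nat set \<Rightarrow> mpoly \<Rightarrow> bool" where
  "vars_in V p \<longleftrightarrow> (\<forall>mo\<in>Poly_Mapping.keys p. Poly_Mapping.keys (mo::mon) \<subseteq> V)"

definition poly_eval :: "(nat \<Rightarrow> complex) \<Rightarrow> mpoly \<Rightarrow> complex" where
  "poly_eval a p = (\<Sum>mo\<in>Poly_Mapping.keys p. Poly_Mapping.lookup p mo * (\<Prod>i\<in>Poly_Mapping.keys mo. a i ^ Poly_Mapping.lookup mo i))"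

definition gen_ideal :: "nat set \<Rightarrow> mpoly set \<Rightarrow> mpoly set" where
  "gen_ideal V G = {f. \<exists>F h. finite F \<and> F \<subseteq> G \<and> (\<forall>g\<in>F. vars_in V (h g))
                          \<and> f = (\<Sum>g\<in>F. h g * g)}"

definition vanishing_ideal :: "nat set \<Rightarrow> (nat \<Rightarrow> complex) set \<Rightarrow> mpoly set" where
  "vanishing_ideal V S = {f. vars_in V f \<and> (\<forall>a\<in>S. poly_eval a f = 0)}"

text \<open>Lexicographic order on monomials: a variable with smaller index is more significant,
  i.e. Var 1 \<succ> Var 2 \<succ> ... . lex_gt a b: the leftmost nonzero entry of a - b is positive.\<close>
definition lex_gt :: "mon \<Rightarrow> mon \<Rightarrow> bool" where
  "lex_gt a b \<longleftrightarrow> (\<exists>i. Poly_Mapping.lookup a i > Poly_Mapping.lookup b i \<and> (\<forall>j<i. Poly_Mapping.lookup a j = Poly_Mapping.lookup b j))"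

definition lead_mon :: "mpoly \<Rightarrow> mon" where
  "lead_mon p = (THE mo. mo \<in> Poly_Mapping.keys p \<and> (\<forall>mo'\<in>Poly_Mapping.keys p. mo' \<noteq> mo \<longrightarrow> lex_gt mo mo'))"

definition lead_term :: "mpoly \<Rightarrow> mpoly" where
  "lead_term p = (if p = 0 then 0 else Poly_Mapping.single (lead_mon p) (Poly_Mapping.lookup p (lead_mon p)))"

definition is_groebner_basis :: "nat set \<Rightarrow> mpoly set \<Rightarrow> mpoly set \<Rightarrow> bool" where
  "is_groebner_basis V G I \<longleftrightarrow> finite G \<and> G \<subseteq> I \<and>
     gen_ideal V (lead_term ` G) = gen_ideal V (lead_term ` I)"

text \<open>The CSP instance L': x_t = Var t (t = 1..k), y_j = Var (k + j) (j = 1..r).\<close>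
definition roots_of_unity :: "nat \<Rightarrow> complex set" where
  "roots_of_unity q = {z. z ^ q = 1}"

definition constraint_poly ::
  "complex \<Rightarrow> nat \<Rightarrow> nat \<Rightarrow> (nat \<Rightarrow> nat) \<Rightarrow> (nat \<Rightarrow> nat \<Rightarrow> nat) \<Rightarrow> nat \<Rightarrow> mpoly" where
  "constraint_poly \<omega> k r \<alpha> A t =
     Var t - Const (\<omega> ^ \<alpha> t) * (\<Prod>j\<in>{1..r}. Var (k + j) ^ A t j)"

definition Sol ::
  "nat \<Rightarrow> complex \<Rightarrow> nat \<Rightarrow> nat \<Rightarrow> (nat \<Rightarrow> nat) \<Rightarrow> (nat \<Rightarrow> nat \<Rightarrow> nat) \<Rightarrow> (nat \<Rightarrow> complex) set" where
  "Sol q \<omega> k r \<alpha> A = {a. (\<forall>i\<in>{1..k+r}. a i \<in> roots_of_unity q) \<and> (\<forall>i. i \<notin> {1..k+r} \<longrightarrow> a i = 0)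
      \<and> (\<forall>t\<in>{1..k}. a t = \<omega> ^ \<alpha> t * (\<Prod>j\<in>{1..r}. a (k + j) ^ A t j))}"

definition CSP_ideal ::
  "nat \<Rightarrow> complex \<Rightarrow> nat \<Rightarrow> nat \<Rightarrow> (nat \<Rightarrow> nat) \<Rightarrow> (nat \<Rightarrow> nat \<Rightarrow> nat) \<Rightarrow> mpoly set" where
  "CSP_ideal q \<omega> k r \<alpha> A = gen_ideal {1..k+r}
     ((\<lambda>i. Var i ^ q - 1) ` {1..k+r} \<union> constraint_poly \<omega> k r \<alpha> A ` {1..k})"

definition G' ::
  "nat \<Rightarrow> complex \<Rightarrow> nat \<Rightarrow> nat \<Rightarrow> (nat \<Rightarrow> nat) \<Rightarrow> (nat \<Rightarrow> nat \<Rightarrow> nat) \<Rightarrow> mpoly set" where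
  "G' q \<omega> k r \<alpha> A = constraint_poly \<omega> k r \<alpha> A ` {1..k} \<union> (\<lambda>j. Var (k + j) ^ q - 1) ` {1..r}"

end

(*
  Modulo G', every monomial is a constant multiple of a standard monomial: substitute
  \<omega>^\<alpha>\<^sub>t y^A\<^sub>t for each x\<^sub>t and reduce every exponent of y\<^sub>j modulo q. Hence every f is
  congruent modulo <G'> to its normal form, a polynomial in y\<^sub>1, ..., y\<^sub>r of degree < q in each
  variable. If f vanishes on Sol(L'), so does its normal form; every point of U\<^sub>q^r extends to
  a solution, so the normal form vanishes on U\<^sub>q^r, and orthogonality of the characters of
  (Z/q)^r forces it to be 0. Thus I(Sol(L')) = <G'>.

  For the Groebner property, reduction never increases a monomial lexicographically, so a
  standard monomial that is the leading monomial of f keeps its coefficient in the normal form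
  of f. The leading monomial of a nonzero f in I(Sol(L')) is therefore not standard: it is
  divisible by some x\<^sub>t or y\<^sub>j^q, the leading monomials of G'.
*)
theory Submission
  imports Defs "HOL-Library.FuncSet"
begin

abbreviation lookup :: "('a \<Rightarrow>\<^sub>0 'b::zero) \<Rightarrow> 'a \<Rightarrow> 'b" where
  "lookup \<equiv> Poly_Mapping.lookup"
abbreviation keys :: "('a \<Rightarrow>\<^sub>0 'b::zero) \<Rightarrow> 'a set" where
  "keys \<equiv> Poly_Mapping.keys"
abbreviation single :: "'a \<Rightarrow> 'b \<Rightarrow> ('a \<Rightarrow>\<^sub>0 'b::zero)" where
  "single \<equiv> Poly_Mapping.single"

lemma poly_mapping_sum_single: "p = (\<Sum>M\<in>keys p. single M (lookup p M))"
proof (rule poly_mapping_eqI)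
  fix N
  have "lookup (\<Sum>M\<in>keys p. single M (lookup p M)) N = (\<Sum>M\<in>keys p. if M = N then lookup p M else 0)"
    by (simp add: lookup_sum lookup_single when_def)
  also have "\<dots> = lookup p N" by (simp add: sum.delta' in_keys_iff)
  finally show "lookup p N = lookup (\<Sum>M\<in>keys p. single M (lookup p M)) N" by simp
qed

lemma diff_single_add_single:
  fixes M :: "'a \<Rightarrow>\<^sub>0 nat"
  assumes "n \<le> lookup M i"
  shows "M - single i n + single i n = M"
  by (rule poly_mapping_eqI) (use assms in \<open>auto simp: lookup_add lookup_minus lookup_single when_def\<close>)

lemma keys_add_mon: "keys (M + N :: mon) = keys M \<union> keys N"
  by (auto simp: in_keys_iff lookup_add)

lemma sum_lookup_add: "(\<Sum>i\<in>S. lookup (M + N :: mon) i) = (\<Sum>i\<in>S. lookup M i) + (\<Sum>i\<in>S. lookup N i)"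
  by (simp add: lookup_add sum.distrib)

lemma prod_single: "(\<Prod>j\<in>F. single (f j) (c j :: complex)) = single (\<Sum>j\<in>F. f j :: mon) (\<Prod>j\<in>F. c j)"
  by (induction F rule: infinite_finite_induct) (simp_all add: mult_single)

lemma Var_power: "Var i ^ n = single (single i n) 1"
proof (induction n)
  case (Suc n)
  have "Var i ^ Suc n = single (single i 1) 1 * single (single i n) 1"
    by (simp only: power_Suc Suc.IH) (simp add: Var_def)
  also have "\<dots> = single (single i (Suc n)) 1"
    by (simp add: mult_single single_add[symmetric])
  finally show ?case .
qed simp

definition mon_eval :: "(nat \<Rightarrow> complex) \<Rightarrow> mon \<Rightarrow> complex" where
  "mon_eval a M = (\<Prod>i\<in>keys M. a i ^ lookup M i)"

lemma mon_eval_eq_prod: "finite S \<Longrightarrow> keys M \<subseteq> S \<Longrightarrow> mon_eval a M = (\<Prod>i\<in>S. a i ^ lookup M i)"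
  unfolding mon_eval_def by (rule prod.mono_neutral_left) (auto simp: in_keys_iff)

lemma mon_eval_add: "mon_eval a (M + N) = mon_eval a M * mon_eval a N"
proof -
  let ?S = "keys M \<union> keys N"
  have "mon_eval a (M + N) = (\<Prod>i\<in>?S. a i ^ lookup (M + N) i)"
    by (intro mon_eval_eq_prod) (use keys_add[of M N] in auto)
  also have "\<dots> = (\<Prod>i\<in>?S. a i ^ lookup M i) * (\<Prod>i\<in>?S. a i ^ lookup N i)"
    by (simp add: lookup_add power_add prod.distrib)
  also have "\<dots> = mon_eval a M * mon_eval a N"
    using mon_eval_eq_prod[of ?S M a] mon_eval_eq_prod[of ?S N a] by simp
  finally show ?thesis .
qed

lemma poly_eval_eq_sum: "finite S \<Longrightarrow> keys p \<subseteq> S \<Longrightarrow> poly_eval a p = (\<Sum>M\<in>S. lookup p M * mon_eval a M)"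
  unfolding poly_eval_def mon_eval_def[symmetric] by (rule sum.mono_neutral_left) (auto simp: in_keys_iff)

lemma poly_eval_add: "poly_eval a (p + q) = poly_eval a p + poly_eval a q"
proof -
  let ?S = "keys p \<union> keys q"
  have "poly_eval a (p + q) = (\<Sum>M\<in>?S. lookup (p + q) M * mon_eval a M)"
    by (intro poly_eval_eq_sum) (use keys_add[of p q] in auto)
  also have "\<dots> = (\<Sum>M\<in>?S. lookup p M * mon_eval a M) + (\<Sum>M\<in>?S. lookup q M * mon_eval a M)"
    by (simp add: lookup_add distrib_right sum.distrib)
  also have "\<dots> = poly_eval a p + poly_eval a q"
    using poly_eval_eq_sum[of ?S p a] poly_eval_eq_sum[of ?S q a] by simp
  finally show ?thesis .
qed

lemma poly_eval_uminus: "poly_eval a (- p) = - poly_eval a p"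
  by (simp add: poly_eval_eq_sum[of "keys p"] sum_negf)

lemma poly_eval_diff: "poly_eval a (p - q) = poly_eval a p - poly_eval a q"
  using poly_eval_add[of a p "- q"] poly_eval_uminus[of a q] by simp

lemma poly_eval_single: "poly_eval a (single M c) = c * mon_eval a M"
  by (simp add: poly_eval_eq_sum[of "{M}"])

lemma poly_eval_zero [simp]: "poly_eval a 0 = 0"
  by (simp add: poly_eval_def)

lemma poly_eval_sum: "finite F \<Longrightarrow> poly_eval a (\<Sum>x\<in>F. f x) = (\<Sum>x\<in>F. poly_eval a (f x))"
  by (induction F rule: finite_induct) (auto simp: poly_eval_add)

lemma poly_eval_mult: "poly_eval a (p * q) = poly_eval a p * poly_eval a q"
proof -
  have "p * q = (\<Sum>M\<in>keys p. single M (lookup p M)) * (\<Sum>N\<in>keys q. single N (lookup q N))"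
    using poly_mapping_sum_single[of p] poly_mapping_sum_single[of q] by simp
  also have "\<dots> = (\<Sum>M\<in>keys p. \<Sum>N\<in>keys q. single (M + N) (lookup p M * lookup q N))"
    by (simp add: sum_product mult_single)
  finally have "poly_eval a (p * q) =
      (\<Sum>M\<in>keys p. \<Sum>N\<in>keys q. lookup p M * lookup q N * mon_eval a (M + N))"
    by (simp add: poly_eval_sum poly_eval_single)
  also have "\<dots> = (\<Sum>M\<in>keys p. lookup p M * mon_eval a M) * (\<Sum>N\<in>keys q. lookup q N * mon_eval a N)"
    by (simp add: sum_product mon_eval_add mult_ac)
  finally show ?thesis by (simp add: poly_eval_def mon_eval_def)
qed

lemma poly_eval_one [simp]: "poly_eval a 1 = 1"
  using poly_eval_single[of a 0 1] by (simp add: mon_eval_def)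

lemma poly_eval_power: "poly_eval a (p ^ n) = poly_eval a p ^ n"
  by (induction n) (auto simp: poly_eval_mult)

lemma poly_eval_prod: "finite F \<Longrightarrow> poly_eval a (\<Prod>x\<in>F. f x) = (\<Prod>x\<in>F. poly_eval a (f x))"
  by (induction F rule: finite_induct) (auto simp: poly_eval_mult)

lemma poly_eval_Var [simp]: "poly_eval a (Var i) = a i"
  by (simp add: Var_def poly_eval_single mon_eval_eq_prod[of "{i}"])

lemma poly_eval_Const [simp]: "poly_eval a (Const c) = c"
  by (simp add: Const_def poly_eval_single mon_eval_def)

lemma poly_eval_cong:
  assumes "vars_in V p" "\<And>i. i \<in> V \<Longrightarrow> a i = b i"
  shows "poly_eval a p = poly_eval b p"
  unfolding poly_eval_def
proof (intro sum.cong refl arg_cong2[where f = "(*)"] prod.cong)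
  fix M i assume "M \<in> keys p" "i \<in> keys M"
  then show "a i ^ lookup M i = b i ^ lookup M i"
    using assms unfolding vars_in_def by (metis subsetD)
qed

lemma vars_in_add: "vars_in V p \<Longrightarrow> vars_in V q \<Longrightarrow> vars_in V (p + q)"
  unfolding vars_in_def using keys_add[of p q] by blast

lemma vars_in_diff: "vars_in V p \<Longrightarrow> vars_in V q \<Longrightarrow> vars_in V (p - q)"
  unfolding vars_in_def using keys_diff[of p q] by blast

lemma vars_in_mult:
  assumes "vars_in V p" "vars_in V q"
  shows "vars_in V (p * q)"
  unfolding vars_in_def
proof
  fix M assume "M \<in> keys (p * q)"
  then obtain a b where "M = a + b" "a \<in> keys p" "b \<in> keys q"
    using keys_mult[of p q] by blast
  then show "keys M \<subseteq> V"
    using assms keys_add[of a b] unfolding vars_in_def by blast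
qed

lemma vars_in_single: "keys M \<subseteq> V \<Longrightarrow> vars_in V (single M c)"
  unfolding vars_in_def by simp

lemma vars_in_zero [simp]: "vars_in V 0"
  by (simp add: vars_in_def)

lemma vars_in_one [simp]: "vars_in V 1"
  by (simp add: vars_in_def)

lemma vars_in_sum: "(\<And>x. x \<in> F \<Longrightarrow> vars_in V (f x)) \<Longrightarrow> vars_in V (\<Sum>x\<in>F. f x)"
  by (induction F rule: infinite_finite_induct) (auto intro: vars_in_add)

lemma vars_in_Var_power_minus_1: "i \<in> V \<Longrightarrow> vars_in V (Var i ^ n - 1)"
  unfolding Var_power by (intro vars_in_diff vars_in_single) (auto simp: vars_in_def)

lemma gen_ideal_sum_mult:
  "finite F \<Longrightarrow> F \<subseteq> G \<Longrightarrow> (\<And>g. g \<in> F \<Longrightarrow> vars_in V (h g)) \<Longrightarrow> (\<Sum>g\<in>F. h g * g) \<in> gen_ideal V G"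
  unfolding gen_ideal_def by (intro CollectI exI[of _ F] exI[of _ h]) simp

lemma gen_ideal_zero: "0 \<in> gen_ideal V G"
  unfolding gen_ideal_def by (rule CollectI, rule exI[of _ "{}"]) auto

lemma gen_ideal_generator: "g \<in> G \<Longrightarrow> g \<in> gen_ideal V G"
  unfolding gen_ideal_def by (rule CollectI, rule exI[of _ "{g}"], rule exI[of _ "\<lambda>_. 1"]) auto

lemma gen_ideal_add:
  assumes "f1 \<in> gen_ideal V G" "f2 \<in> gen_ideal V G"
  shows "f1 + f2 \<in> gen_ideal V G"
proof -
  obtain F1 h1 where 1: "finite F1" "F1 \<subseteq> G" "\<forall>g\<in>F1. vars_in V (h1 g)" "f1 = (\<Sum>g\<in>F1. h1 g * g)"
    using assms(1) unfolding gen_ideal_def by blast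
  obtain F2 h2 where 2: "finite F2" "F2 \<subseteq> G" "\<forall>g\<in>F2. vars_in V (h2 g)" "f2 = (\<Sum>g\<in>F2. h2 g * g)"
    using assms(2) unfolding gen_ideal_def by blast
  define h where "h g = (if g \<in> F1 then h1 g else 0) + (if g \<in> F2 then h2 g else 0)" for g
  have "(\<Sum>g\<in>F1 \<union> F2. h g * g) =
      (\<Sum>g\<in>F1 \<union> F2. if g \<in> F1 then h1 g * g else 0) + (\<Sum>g\<in>F1 \<union> F2. if g \<in> F2 then h2 g * g else 0)"
    unfolding h_def distrib_right sum.distrib[symmetric] by (intro sum.cong) auto
  also have "\<dots> = f1 + f2"
    using 1 2 by (simp add: sum.If_cases Int_absorb1)
  finally have "f1 + f2 = (\<Sum>g\<in>F1 \<union> F2. h g * g)" by simp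
  also have "\<dots> \<in> gen_ideal V G"
    using 1 2 unfolding h_def by (intro gen_ideal_sum_mult) (auto intro!: vars_in_add)
  finally show ?thesis .
qed

lemma gen_ideal_mult:
  assumes "vars_in V p" "f \<in> gen_ideal V G"
  shows "p * f \<in> gen_ideal V G"
proof -
  obtain F h where F: "finite F" "F \<subseteq> G" "\<forall>g\<in>F. vars_in V (h g)" and f: "f = (\<Sum>g\<in>F. h g * g)"
    using assms(2) unfolding gen_ideal_def by blast
  have "p * f = (\<Sum>g\<in>F. (p * h g) * g)"
    unfolding f by (simp add: sum_distrib_left mult.assoc)
  also have "\<dots> \<in> gen_ideal V G"
    using F assms(1) by (intro gen_ideal_sum_mult vars_in_mult) auto
  finally show ?thesis .
qed

lemma gen_ideal_sum: "(\<And>x. x \<in> F \<Longrightarrow> f x \<in> gen_ideal V G) \<Longrightarrow> (\<Sum>x\<in>F. f x) \<in> gen_ideal V G"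
  by (induction F rule: infinite_finite_induct) (auto intro: gen_ideal_add gen_ideal_zero)

lemma gen_ideal_subset_gen_ideal:
  assumes "G \<subseteq> gen_ideal V H"
  shows "gen_ideal V G \<subseteq> gen_ideal V H"
proof
  fix f assume "f \<in> gen_ideal V G"
  then obtain F h where "finite F" "F \<subseteq> G" "\<forall>g\<in>F. vars_in V (h g)" "f = (\<Sum>g\<in>F. h g * g)"
    unfolding gen_ideal_def by blast
  then show "f \<in> gen_ideal V H"
    using assms by (auto intro!: gen_ideal_sum gen_ideal_mult)
qed

lemma gen_ideal_mono: "G \<subseteq> H \<Longrightarrow> gen_ideal V G \<subseteq> gen_ideal V H"
  by (rule gen_ideal_subset_gen_ideal) (auto intro: gen_ideal_generator)

lemma gen_ideal_subset_vanishing_ideal: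
  assumes "G \<subseteq> vanishing_ideal V S"
  shows "gen_ideal V G \<subseteq> vanishing_ideal V S"
proof
  fix f assume "f \<in> gen_ideal V G"
  then obtain F h where F: "finite F" "F \<subseteq> G" "\<forall>g\<in>F. vars_in V (h g)" and f: "f = (\<Sum>g\<in>F. h g * g)"
    unfolding gen_ideal_def by blast
  have "vars_in V f"
    unfolding f using F assms by (intro vars_in_sum vars_in_mult) (auto simp: vanishing_ideal_def)
  moreover have "poly_eval a f = 0" if "a \<in> S" for a
    unfolding f using F assms that by (simp add: poly_eval_sum poly_eval_mult subset_iff vanishing_ideal_def)
  ultimately show "f \<in> vanishing_ideal V S"
    unfolding vanishing_ideal_def by blast
qed

(* The linear order of Poly_Mapping on monomials is lexicographic, smaller indices being more significant. *)
lemma lex_gt_iff_less: "lex_gt M N \<longleftrightarrow> N < M"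
  unfolding lex_gt_def by transfer (auto simp: less_fun_def)

lemma less_single_mon: "lookup (N :: mon) i < n \<Longrightarrow> (\<forall>l<i. lookup N l = 0) \<Longrightarrow> N < single i n"
  unfolding lex_gt_iff_less[symmetric] lex_gt_def by (auto simp: lookup_single intro!: exI[of _ i])

lemma lead_term_eq_Max:
  assumes "p \<noteq> 0"
  shows "lead_term p = single (Max (keys p)) (lookup p (Max (keys p)))"
proof -
  have "keys p \<noteq> {}" using assms by simp
  then have "Max (keys p) \<in> keys p \<and> (\<forall>M\<in>keys p. M \<noteq> Max (keys p) \<longrightarrow> lex_gt (Max (keys p)) M)"
    by (auto simp: lex_gt_iff_less order.not_eq_order_implies_strict)
  then have "lead_mon p = Max (keys p)"
    unfolding lead_mon_def
    by (rule the_equality) (force simp: lex_gt_iff_less intro!: Max_eqI[symmetric] order.order_iff_strict[THEN iffD2])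
  then show ?thesis
    using assms by (simp add: lead_term_def)
qed

lemma lead_term_binomial:
  assumes "N < M"
  shows "lead_term (single M 1 - single N c) = single M 1"
proof -
  let ?p = "single M 1 - single N c :: mpoly"
  have coeff: "lookup ?p M = 1"
    using assms by (simp add: lookup_minus lookup_single)
  then have "M \<in> keys ?p" by (simp add: in_keys_iff)
  moreover have "keys ?p \<subseteq> {M, N}"
    using keys_diff[of "single M 1" "single N c"] by (auto split: if_splits)
  ultimately have "Max (keys ?p) = M"
    using assms by (intro Max_eqI) auto
  moreover have "?p \<noteq> 0" using coeff by auto
  ultimately show ?thesis
    using coeff by (simp add: lead_term_eq_Max)
qed

lemma is_groebner_basisI:
  assumes "finite G" "G \<subseteq> I" "\<And>f. f \<in> I \<Longrightarrow> f \<noteq> 0 \<Longrightarrow> lead_term f \<in> gen_ideal V (lead_term ` G)"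
  shows "is_groebner_basis V G I"
  unfolding is_groebner_basis_def
proof (intro conjI equalityI gen_ideal_subset_gen_ideal)
  show "lead_term ` G \<subseteq> gen_ideal V (lead_term ` I)"
    using assms(2) by (auto intro: gen_ideal_generator)
  show "lead_term ` I \<subseteq> gen_ideal V (lead_term ` G)"
    using assms(3) by (auto simp: lead_term_def gen_ideal_zero)
qed (use assms in auto)

subsection \<open>Polynomials vanishing on a grid of roots of unity\<close>

lemma power_mod_root_of_unity:
  fixes \<omega> :: "'a::monoid_mult"
  assumes "\<omega> ^ q = 1"
  shows "\<omega> ^ n = \<omega> ^ (n mod q)"
proof -
  have "\<omega> ^ n = (\<omega> ^ q) ^ (n div q) * \<omega> ^ (n mod q)"
    by (simp only: power_mult[symmetric] power_add[symmetric] mult_div_mod_eq)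
  then show ?thesis using assms by simp
qed

lemma power_root_of_unity:
  fixes z :: "'a::monoid_mult"
  assumes "z ^ q = 1"
  shows "(z ^ n) ^ q = 1"
proof -
  have "(z ^ n) ^ q = (z ^ q) ^ n"
    by (simp only: power_mult[symmetric] mult.commute)
  then show ?thesis using assms by simp
qed

lemma sum_powers_primitive_root:
  fixes \<omega> :: "'a::field"
  assumes "\<omega> ^ q = 1" "\<forall>n. 0 < n \<and> n < q \<longrightarrow> \<omega> ^ n \<noteq> 1"
  shows "(\<Sum>b<q. \<omega> ^ (b * D)) = (if q dvd D then of_nat q else 0)"
proof (cases "q dvd D")
  case True
  then obtain c where "D = q * c" by blast
  then have "\<omega> ^ (b * D) = (\<omega> ^ q) ^ (b * c)" for b
    by (simp add: power_mult[symmetric] ac_simps)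
  then have "\<omega> ^ (b * D) = 1" for b
    using assms(1) by simp
  then show ?thesis using True by simp
next
  case False
  show ?thesis
  proof (cases "q = 0")
    case True
    then show ?thesis using False by simp
  next
    case q: False
    have "0 < D mod q" "D mod q < q"
      using False q by (auto simp: dvd_eq_mod_eq_0)
    then have "\<omega> ^ D \<noteq> 1"
      using assms power_mod_root_of_unity[OF assms(1), of D] by metis
    moreover have "(\<omega> ^ D) ^ q = 1"
      using assms(1) by (rule power_root_of_unity)
    ultimately have "(\<Sum>b<q. (\<omega> ^ D) ^ b) = 0"
      by (simp add: sum_gp_strict)
    then show ?thesis
      using False by (simp add: power_mult[symmetric] mult.commute)
  qed
qed

lemma dvd_add_diff_iff_eq:
  fixes x d q :: nat
  assumes "x < q" "d < q"
  shows "q dvd x + (q - d) \<longleftrightarrow> x = d"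
proof
  assume "q dvd x + (q - d)"
  then obtain c where c: "x + (q - d) = q * c" by blast
  then have "q * c < q * 2" "q * 0 < q * c" using assms by linarith+
  then have "c = 1" by (simp only: mult_less_cancel1) linarith
  then show "x = d" using c assms by simp
qed (use assms in simp)

lemma sum_PiE_prod_powers_primitive_root:
  fixes \<omega> :: "'a::field"
  assumes "\<omega> ^ q = 1" "\<forall>n. 0 < n \<and> n < q \<longrightarrow> \<omega> ^ n \<noteq> 1" "finite Y"
    and "\<forall>i\<in>Y. u i < q" "\<forall>i\<in>Y. v i < q"
  shows "(\<Sum>s\<in>PiE Y (\<lambda>_. {..<q}). \<Prod>i\<in>Y. \<omega> ^ (s i * (u i + (q - v i))))
    = (if \<forall>i\<in>Y. u i = v i then of_nat q ^ card Y else 0)"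
proof -
  have "(\<Sum>s\<in>PiE Y (\<lambda>_. {..<q}). \<Prod>i\<in>Y. \<omega> ^ (s i * (u i + (q - v i))))
      = (\<Prod>i\<in>Y. \<Sum>b<q. \<omega> ^ (b * (u i + (q - v i))))"
    using assms(3) by (rule prod_sum_PiE[symmetric]) simp
  also have "\<dots> = (\<Prod>i\<in>Y. if u i = v i then of_nat q else 0)"
    using assms by (intro prod.cong refl) (simp add: sum_powers_primitive_root dvd_add_diff_iff_eq)
  also have "\<dots> = (if \<forall>i\<in>Y. u i = v i then of_nat q ^ card Y else 0)"
    using assms(3) by (auto intro: prod_zero)
  finally show ?thesis .
qed

lemma mon_eq_on_vars:
  fixes M N :: mon
  assumes "keys M \<subseteq> Y" "keys N \<subseteq> Y" "\<forall>i\<in>Y. lookup M i = lookup N i"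
  shows "M = N"
  by (rule poly_mapping_eqI) (metis assms in_keys_iff subsetD)

lemma poly_eval_powers:
  assumes "finite Y" "vars_in Y g"
  shows "poly_eval (\<lambda>i. z ^ s i) g = (\<Sum>M\<in>keys g. lookup g M * (\<Prod>i\<in>Y. z ^ (s i * lookup M i)))"
  unfolding poly_eval_def mon_eval_def[symmetric]
  using assms by (intro sum.cong refl) (simp add: mon_eval_eq_prod vars_in_def power_mult)

text \<open>Fourier inversion on \<open>(\<int>/q)\<^sup>Y\<close>; the factor \<open>\<omega>^(s i * (q - E i))\<close> stands for \<open>\<omega>^(-s i * E i)\<close>.\<close>
lemma character_sum_eval_eq_coeff:
  fixes \<omega> :: complex and g :: mpoly
  assumes \<omega>: "\<omega> ^ q = 1" "\<forall>n. 0 < n \<and> n < q \<longrightarrow> \<omega> ^ n \<noteq> 1"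
    and Y: "finite Y" "vars_in Y g" and deg: "\<forall>M\<in>keys g. \<forall>i. lookup M i < q" and E: "E \<in> keys g"
  shows "(\<Sum>s\<in>PiE Y (\<lambda>_. {..<q}). poly_eval (\<lambda>i. \<omega> ^ s i) g * \<omega> ^ (\<Sum>i\<in>Y. s i * (q - lookup E i)))
    = lookup g E * of_nat q ^ card Y"
proof -
  let ?S = "PiE Y (\<lambda>_. {..<q})"
  let ?char = "\<lambda>M s. \<Prod>i\<in>Y. \<omega> ^ (s i * (lookup M i + (q - lookup E i)))"
  have keys_Y: "keys M \<subseteq> Y" if "M \<in> keys g" for M
    using Y(2) that by (simp add: vars_in_def)
  have agree_iff: "(\<forall>i\<in>Y. lookup M i = lookup E i) \<longleftrightarrow> M = E" if "M \<in> keys g" for M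
    using mon_eq_on_vars[OF keys_Y[OF that] keys_Y[OF E]] by blast
  have "poly_eval (\<lambda>i. \<omega> ^ s i) g * \<omega> ^ (\<Sum>i\<in>Y. s i * (q - lookup E i))
      = (\<Sum>M\<in>keys g. lookup g M * ?char M s)" for s
    by (simp add: poly_eval_powers[OF Y] sum_distrib_right power_sum mult.assoc
        prod.distrib[symmetric] power_add[symmetric] distrib_left)
  then have "(\<Sum>s\<in>?S. poly_eval (\<lambda>i. \<omega> ^ s i) g * \<omega> ^ (\<Sum>i\<in>Y. s i * (q - lookup E i)))
      = (\<Sum>M\<in>keys g. lookup g M * (\<Sum>s\<in>?S. ?char M s))"
    by (simp only: sum_distrib_left sum.swap[of _ ?S])
  also have "\<dots> = (\<Sum>M\<in>keys g. lookup g M * (if \<forall>i\<in>Y. lookup M i = lookup E i then of_nat q ^ card Y else 0))"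
    using deg E by (intro sum.cong refl) (simp add: sum_PiE_prod_powers_primitive_root[OF \<omega> Y(1)])
  also have "\<dots> = (\<Sum>M\<in>keys g. if M = E then lookup g E * of_nat q ^ card Y else 0)"
    by (intro sum.cong refl) (simp add: agree_iff)
  also have "\<dots> = lookup g E * of_nat q ^ card Y"
    using E by simp
  finally show ?thesis .
qed

lemma poly_vanishing_on_roots_of_unity_eq_0:
  fixes \<omega> :: complex and g :: mpoly
  assumes \<omega>: "\<omega> ^ q = 1" "\<forall>n. 0 < n \<and> n < q \<longrightarrow> \<omega> ^ n \<noteq> 1"
    and Y: "finite Y" "vars_in Y g" and deg: "\<forall>M\<in>keys g. \<forall>i. lookup M i < q"
    and vanish: "\<forall>a. (\<forall>i\<in>Y. a i \<in> roots_of_unity q) \<longrightarrow> poly_eval a g = 0"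
  shows "g = 0"
proof (rule poly_mapping_eqI)
  fix E
  show "lookup g E = lookup 0 E"
  proof (cases "E \<in> keys g")
    case True
    then have "q > 0" using deg by fastforce
    have "\<forall>i\<in>Y. \<omega> ^ s i \<in> roots_of_unity q" for s
      using power_root_of_unity[OF \<omega>(1)] by (simp add: roots_of_unity_def)
    then have "lookup g E * of_nat q ^ card Y = 0"
      using vanish character_sum_eval_eq_coeff[OF \<omega> Y deg True] by simp
    then show ?thesis using \<open>q > 0\<close> by simp
  qed (simp add: in_keys_iff)
qed

subsection \<open>Reduction modulo G'\<close>

locale csp_instance =
  fixes q k r :: nat and \<omega> :: complex and \<alpha> :: "nat \<Rightarrow> nat" and A :: "nat \<Rightarrow> nat \<Rightarrow> nat"
  assumes q_pos: "q > 0" and omega_q: "\<omega> ^ q = 1"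
    and omega_primitive: "\<forall>n. 0 < n \<and> n < q \<longrightarrow> \<omega> ^ n \<noteq> 1"
begin

abbreviation "gens \<equiv> G' q \<omega> k r \<alpha> A"
abbreviation "solutions \<equiv> Sol q \<omega> k r \<alpha> A"
abbreviation "ideal_G \<equiv> gen_ideal {1..k+r} gens"
abbreviation "ideal_Sol \<equiv> vanishing_ideal {1..k+r} solutions"

definition y_mon :: "(nat \<Rightarrow> nat) \<Rightarrow> mon" where
  "y_mon e = (\<Sum>j\<in>{1..r}. single (k + j) (e j))"

definition x_degree :: "mon \<Rightarrow> nat" where
  "x_degree M = (\<Sum>t\<in>{1..k}. lookup M t)"

(* Substituting \<omega>^\<alpha>\<^sub>t y^A\<^sub>t for every x\<^sub>t turns M into \<omega>^(omega_exp M) times y^(y_exp M). *)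
definition y_exp :: "mon \<Rightarrow> nat \<Rightarrow> nat" where
  "y_exp M j = lookup M (k + j) + (\<Sum>t\<in>{1..k}. lookup M t * A t j)"

definition omega_exp :: "mon \<Rightarrow> nat" where
  "omega_exp M = (\<Sum>t\<in>{1..k}. \<alpha> t * lookup M t)"

definition normal_mon :: "mon \<Rightarrow> mon" where
  "normal_mon M = y_mon (\<lambda>j. y_exp M j mod q)"

definition normal_form :: "mpoly \<Rightarrow> mpoly" where
  "normal_form f = (\<Sum>M\<in>keys f. single (normal_mon M) (lookup f M * \<omega> ^ omega_exp M))"

lemma lookup_y_mon: "lookup (y_mon e) i = (if k < i \<and> i \<le> k + r then e (i - k) else 0)"
proof -
  have "lookup (y_mon e) i = (\<Sum>j\<in>{1..r}. if j = i - k \<and> k < i then e j else 0)"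
    unfolding y_mon_def lookup_sum by (intro sum.cong) (auto simp: lookup_single)
  also have "\<dots> = (if k < i \<and> i \<le> k + r then e (i - k) else 0)"
    by (auto simp: sum.delta[unfolded conj_commute])
  finally show ?thesis .
qed

lemma keys_y_mon: "keys (y_mon e) \<subseteq> {k+1..k+r}"
  by (auto simp: in_keys_iff lookup_y_mon split: if_splits)

lemma y_mon_lookup: "keys M \<subseteq> {k+1..k+r} \<Longrightarrow> y_mon (\<lambda>j. lookup M (k + j)) = M"
  by (rule poly_mapping_eqI) (auto simp: lookup_y_mon in_keys_iff)

lemma y_mon_cong: "(\<And>j. j \<in> {1..r} \<Longrightarrow> e j = e' j) \<Longrightarrow> y_mon e = y_mon e'"
  unfolding y_mon_def by (intro sum.cong) auto

lemma keys_subset_y_vars: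
  assumes "keys M \<subseteq> {1..k+r}" "\<forall>t\<in>{1..k}. lookup M t = 0"
  shows "keys M \<subseteq> {k+1..k+r}"
proof
  fix i assume "i \<in> keys M"
  then have "i \<in> {1..k+r}" "lookup M i \<noteq> 0"
    using assms(1) by (auto simp only: in_keys_iff)
  then show "i \<in> {k+1..k+r}"
    using assms(2) by (cases "i \<le> k") auto
qed

lemma x_degree_add: "x_degree (M + N) = x_degree M + x_degree N"
  by (simp add: x_degree_def sum_lookup_add)

lemma y_exp_add: "y_exp (M + N) j = y_exp M j + y_exp N j"
  by (simp add: y_exp_def lookup_add sum.distrib algebra_simps)

lemma omega_exp_add: "omega_exp (M + N) = omega_exp M + omega_exp N"
  by (simp add: omega_exp_def lookup_add sum.distrib algebra_simps)

lemma x_var_exps: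
  assumes "t \<in> {1..k}"
  shows "x_degree (single t n) = n" "j \<in> {1..r} \<Longrightarrow> y_exp (single t n) j = n * A t j"
    "omega_exp (single t n) = \<alpha> t * n"
  using assms by (simp_all add: x_degree_def y_exp_def omega_exp_def lookup_single when_mult mult_when)
    (simp_all add: when_def)

lemma y_mon_exps:
  shows "x_degree (y_mon e) = 0" "j \<in> {1..r} \<Longrightarrow> y_exp (y_mon e) j = e j" "omega_exp (y_mon e) = 0"
  by (simp_all add: x_degree_def y_exp_def omega_exp_def lookup_y_mon)

lemma constraint_poly_eq:
  "constraint_poly \<omega> k r \<alpha> A t = single (single t 1) 1 - single (y_mon (A t)) (\<omega> ^ \<alpha> t)"
proof -
  have "(\<Prod>j\<in>{1..r}. Var (k + j) ^ A t j) = single (y_mon (A t)) 1"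
    by (simp add: Var_power prod_single y_mon_def)
  then show ?thesis
    by (simp add: constraint_poly_def Var_def Const_def mult_single)
qed

lemma domain_poly_eq: "Var i ^ q - 1 = single (single i q) 1 - single 0 1"
  by (simp add: Var_power)

lemma constraint_poly_in_gens: "t \<in> {1..k} \<Longrightarrow> constraint_poly \<omega> k r \<alpha> A t \<in> gens"
  by (simp add: G'_def)

lemma domain_poly_in_gens: "j \<in> {1..r} \<Longrightarrow> Var (k + j) ^ q - 1 \<in> gens"
  by (auto simp: G'_def)

lemma monomial_times_gen_in_ideal_G:
  "g \<in> gens \<Longrightarrow> keys M \<subseteq> {1..k+r} \<Longrightarrow> single M c * g \<in> ideal_G"
  by (intro gen_ideal_mult vars_in_single gen_ideal_generator)

lemma x_substitution_step:
  assumes "t \<in> {1..k}" "keys (M + single t 1) \<subseteq> {1..k+r}"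
  shows "single (M + single t 1) c - single (M + y_mon (A t)) (c * \<omega> ^ \<alpha> t) \<in> ideal_G"
proof -
  have "single (M + single t 1) c - single (M + y_mon (A t)) (c * \<omega> ^ \<alpha> t)
      = single M c * constraint_poly \<omega> k r \<alpha> A t"
    by (simp add: constraint_poly_eq right_diff_distrib mult_single)
  also have "\<dots> \<in> ideal_G"
    using assms by (intro monomial_times_gen_in_ideal_G constraint_poly_in_gens) (auto simp: keys_add_mon)
  finally show ?thesis .
qed

lemma y_reduction_step:
  assumes "j \<in> {1..r}" "keys (Z + single (k + j) q) \<subseteq> {1..k+r}"
  shows "single (Z + single (k + j) q) c - single Z c \<in> ideal_G"
proof -
  have "single (Z + single (k + j) q) c - single Z c = single Z c * (Var (k + j) ^ q - 1)"
    by (simp add: domain_poly_eq right_diff_distrib mult_single)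
  also have "\<dots> \<in> ideal_G"
    using assms by (intro monomial_times_gen_in_ideal_G domain_poly_in_gens) (auto simp: keys_add_mon)
  finally show ?thesis .
qed

lemma x_substitution:
  assumes "keys M \<subseteq> {1..k+r}"
  shows "single M c - single (y_mon (y_exp M)) (c * \<omega> ^ omega_exp M) \<in> ideal_G"
  using assms
proof (induction "x_degree M" arbitrary: M c rule: less_induct)
  case less
  show ?case
  proof (cases "\<exists>t\<in>{1..k}. 0 < lookup M t")
    case True
    then obtain t where t: "t \<in> {1..k}" "0 < lookup M t" by blast
    define M' where "M' = M - single t 1"
    have M: "M = M' + single t 1"
      using t(2) by (simp add: M'_def diff_single_add_single)
    let ?M'' = "M' + y_mon (A t)"
    have keys: "keys ?M'' \<subseteq> {1..k+r}"
      using less.prems keys_y_mon[of "A t"] unfolding M by (auto simp: keys_add_mon)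
    have "x_degree ?M'' < x_degree M"
      unfolding M x_degree_add x_var_exps(1)[OF t(1)] y_mon_exps by simp
    from less.hyps[OF this keys]
    have IH: "single ?M'' (c * \<omega> ^ \<alpha> t) - single (y_mon (y_exp ?M'')) (c * \<omega> ^ \<alpha> t * \<omega> ^ omega_exp ?M'')
        \<in> ideal_G" .
    have Y: "y_mon (y_exp ?M'') = y_mon (y_exp M)"
      by (rule y_mon_cong) (simp add: M y_exp_add x_var_exps[OF t(1)] y_mon_exps)
    have C: "c * \<omega> ^ \<alpha> t * \<omega> ^ omega_exp ?M'' = c * \<omega> ^ omega_exp M"
      by (simp add: M omega_exp_add x_var_exps[OF t(1)] y_mon_exps power_add)
    have step: "single M c - single ?M'' (c * \<omega> ^ \<alpha> t) \<in> ideal_G"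
      using x_substitution_step[OF t(1) less.prems[unfolded M]] unfolding M .
    from gen_ideal_add[OF step IH] show ?thesis
      unfolding Y C by simp
  next
    case False
    then have "keys M \<subseteq> {k+1..k+r}"
      using less.prems by (intro keys_subset_y_vars) auto
    moreover have "y_exp M = (\<lambda>j. lookup M (k + j))" "omega_exp M = 0"
      using False by (auto simp: y_exp_def omega_exp_def)
    ultimately show ?thesis
      by (simp add: y_mon_lookup gen_ideal_zero)
  qed
qed

lemma y_reduction:
  assumes "keys Z \<subseteq> {k+1..k+r}"
  shows "single Z c - single (y_mon (\<lambda>j. lookup Z (k + j) mod q)) c \<in> ideal_G"
  using assms
proof (induction "\<Sum>i\<in>{k+1..k+r}. lookup Z i" arbitrary: Z rule: less_induct)
  case less
  show ?case
  proof (cases "\<exists>j\<in>{1..r}. q \<le> lookup Z (k + j)")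
    case True
    then obtain j where j: "j \<in> {1..r}" "q \<le> lookup Z (k + j)" by blast
    define Z' where "Z' = Z - single (k + j) q"
    have Z: "Z = Z' + single (k + j) q"
      using j(2) by (simp add: Z'_def diff_single_add_single)
    have keys: "keys Z' \<subseteq> {k+1..k+r}"
      using less.prems unfolding Z by (auto simp: keys_add_mon)
    have "(\<Sum>i\<in>{k+1..k+r}. lookup Z' i) < (\<Sum>i\<in>{k+1..k+r}. lookup Z i)"
      using j(1) q_pos unfolding Z sum_lookup_add by (simp add: lookup_single when_def)
    from less.hyps[OF this keys]
    have IH: "single Z' c - single (y_mon (\<lambda>j. lookup Z' (k + j) mod q)) c \<in> ideal_G" .
    have Y: "y_mon (\<lambda>j. lookup Z' (k + j) mod q) = y_mon (\<lambda>j. lookup Z (k + j) mod q)"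
      by (rule y_mon_cong) (simp add: Z lookup_add lookup_single when_def)
    have "keys (Z' + single (k + j) q) \<subseteq> {1..k+r}"
      using less.prems unfolding Z by auto
    from gen_ideal_add[OF y_reduction_step[OF j(1) this, where c = c] IH]
    show ?thesis
      unfolding Y by (simp flip: Z)
  next
    case False
    then have "y_mon (\<lambda>j. lookup Z (k + j) mod q) = y_mon (\<lambda>j. lookup Z (k + j))"
      by (intro y_mon_cong) (simp add: not_le)
    then show ?thesis
      using less.prems by (simp add: y_mon_lookup gen_ideal_zero)
  qed
qed

lemma normal_mon_congruence:
  assumes "keys M \<subseteq> {1..k+r}"
  shows "single M c - single (normal_mon M) (c * \<omega> ^ omega_exp M) \<in> ideal_G"
proof -
  have "y_mon (\<lambda>j. lookup (y_mon (y_exp M)) (k + j) mod q) = normal_mon M"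
    unfolding normal_mon_def by (rule y_mon_cong) (simp add: lookup_y_mon)
  then have "single (y_mon (y_exp M)) (c * \<omega> ^ omega_exp M) - single (normal_mon M) (c * \<omega> ^ omega_exp M)
      \<in> ideal_G"
    using y_reduction[OF keys_y_mon] by metis
  from gen_ideal_add[OF x_substitution[OF assms, where c = c] this] show ?thesis
    by simp
qed

lemma normal_form_congruence:
  assumes "vars_in {1..k+r} f"
  shows "f - normal_form f \<in> ideal_G"
proof -
  have "f - normal_form f
      = (\<Sum>M\<in>keys f. single M (lookup f M) - single (normal_mon M) (lookup f M * \<omega> ^ omega_exp M))"
    unfolding normal_form_def sum_subtractf by (subst poly_mapping_sum_single[of f]) simp
  also have "\<dots> \<in> ideal_G"
    using assms by (intro gen_ideal_sum normal_mon_congruence) (auto simp: vars_in_def)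
  finally show ?thesis .
qed

subsection \<open>The vanishing ideal of the solutions\<close>

lemma constraint_poly_vanishing:
  assumes t: "t \<in> {1..k}"
  shows "constraint_poly \<omega> k r \<alpha> A t \<in> ideal_Sol"
  unfolding vanishing_ideal_def
proof (intro CollectI conjI ballI)
  show "vars_in {1..k+r} (constraint_poly \<omega> k r \<alpha> A t)"
    unfolding constraint_poly_eq using t keys_y_mon[of "A t"] by (intro vars_in_diff vars_in_single) auto
  fix a assume "a \<in> solutions"
  then have "a t = \<omega> ^ \<alpha> t * (\<Prod>j\<in>{1..r}. a (k + j) ^ A t j)"
    using t by (simp add: Sol_def)
  then show "poly_eval a (constraint_poly \<omega> k r \<alpha> A t) = 0"
    by (simp add: constraint_poly_def poly_eval_diff poly_eval_mult poly_eval_prod poly_eval_power)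
qed

lemma domain_poly_vanishing: "i \<in> {1..k+r} \<Longrightarrow> Var i ^ q - 1 \<in> ideal_Sol"
  by (auto simp: vanishing_ideal_def Sol_def roots_of_unity_def poly_eval_diff poly_eval_power
      intro: vars_in_Var_power_minus_1)

lemma ideal_G_subset_ideal_Sol: "ideal_G \<subseteq> ideal_Sol"
proof (rule gen_ideal_subset_vanishing_ideal)
  show "gens \<subseteq> ideal_Sol"
    unfolding G'_def
  proof (intro Un_least image_subsetI)
    fix j assume "j \<in> {1..r}"
    then show "Var (k + j) ^ q - 1 \<in> ideal_Sol"
      by (intro domain_poly_vanishing) auto
  qed (rule constraint_poly_vanishing)
qed

lemma solution_extending:
  assumes "\<forall>i\<in>{k+1..k+r}. b i \<in> roots_of_unity q"
  obtains a where "a \<in> solutions" "\<forall>i\<in>{k+1..k+r}. a i = b i"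
proof
  define a where "a i = (if i \<in> {1..k} then \<omega> ^ \<alpha> i * (\<Prod>j\<in>{1..r}. b (k + j) ^ A i j)
    else if i \<in> {k+1..k+r} then b i else 0)" for i
  show "\<forall>i\<in>{k+1..k+r}. a i = b i"
    by (simp add: a_def)
  have "(b (k + j) ^ e j) ^ q = 1" if "j \<in> {1..r}" for j e
    using assms that by (intro power_root_of_unity) (simp add: roots_of_unity_def)
  then have root: "(\<omega> ^ n * (\<Prod>j\<in>{1..r}. b (k + j) ^ e j)) ^ q = 1" for n e
    by (simp add: power_mult_distrib prod_power_distrib power_root_of_unity[OF omega_q])
  show "a \<in> solutions"
    using assms root by (auto simp: Sol_def a_def roots_of_unity_def)
qed

lemma keys_normal_form: "keys (normal_form f) \<subseteq> normal_mon ` keys f"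
  unfolding normal_form_def by (rule order_trans[OF keys_sum]) auto

lemma lookup_normal_mon_less: "lookup (normal_mon M) i < q"
  by (simp add: normal_mon_def lookup_y_mon q_pos)

lemma vars_in_normal_form: "vars_in {k+1..k+r} (normal_form f)"
  using keys_normal_form keys_y_mon by (fastforce simp: vars_in_def normal_mon_def)

lemma normal_form_eq_0:
  assumes f: "f \<in> ideal_Sol"
  shows "normal_form f = 0"
proof (rule poly_vanishing_on_roots_of_unity_eq_0[OF omega_q omega_primitive _ vars_in_normal_form])
  show "\<forall>M\<in>keys (normal_form f). \<forall>i. lookup M i < q"
    using keys_normal_form lookup_normal_mon_less by blast
  show "\<forall>b. (\<forall>i\<in>{k+1..k+r}. b i \<in> roots_of_unity q) \<longrightarrow> poly_eval b (normal_form f) = 0"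
  proof (intro allI impI)
    fix b assume "\<forall>i\<in>{k+1..k+r}. b i \<in> roots_of_unity q"
    then obtain a where a: "a \<in> solutions" "\<forall>i\<in>{k+1..k+r}. a i = b i"
      by (rule solution_extending)
    have "f - normal_form f \<in> ideal_Sol"
      using f ideal_G_subset_ideal_Sol normal_form_congruence by (auto simp: vanishing_ideal_def)
    then have "poly_eval a (normal_form f) = 0"
      using f a(1) by (auto simp: vanishing_ideal_def poly_eval_diff)
    then show "poly_eval b (normal_form f) = 0"
      using poly_eval_cong[OF vars_in_normal_form, of a b] a(2) by simp
  qed
qed simp

lemma ideal_Sol_subset_ideal_G: "ideal_Sol \<subseteq> ideal_G"
proof
  fix f assume "f \<in> ideal_Sol"
  then have "f - normal_form f \<in> ideal_G"
    by (intro normal_form_congruence) (simp add: vanishing_ideal_def)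
  then show "f \<in> ideal_G"
    using normal_form_eq_0[OF \<open>f \<in> ideal_Sol\<close>] by simp
qed

subsection \<open>Leading terms of the vanishing ideal\<close>

lemma lookup_normal_form:
  "lookup (normal_form f) N = (\<Sum>M\<in>{M\<in>keys f. normal_mon M = N}. lookup f M * \<omega> ^ omega_exp M)"
  by (simp add: normal_form_def lookup_sum lookup_single when_def sum.inter_filter)

lemma normal_mon_le: "normal_mon M \<le> M"
proof (rule ccontr)
  assume "\<not> normal_mon M \<le> M"
  then have "lex_gt (normal_mon M) M"
    by (simp add: lex_gt_iff_less)
  then obtain i where i: "lookup M i < lookup (normal_mon M) i" "\<forall>l<i. lookup (normal_mon M) l = lookup M l"
    unfolding lex_gt_def by blast
  then have y: "k < i \<and> i \<le> k + r"
    by (auto simp: normal_mon_def lookup_y_mon split: if_splits)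
  have "lookup M t = 0" if "t \<in> {1..k}" for t
    using i(2)[rule_format, of t] y that by (simp add: normal_mon_def lookup_y_mon)
  then have "\<forall>t\<in>{1..k}. lookup M t = 0" by blast
  with y have "lookup (normal_mon M) i = lookup M i mod q"
    by (simp add: normal_mon_def lookup_y_mon y_exp_def)
  with i(1) show False
    by (metis mod_less_eq_dividend leD)
qed

lemma normal_mon_eq_self:
  assumes "keys M \<subseteq> {1..k+r}" "\<forall>t\<in>{1..k}. lookup M t = 0" "\<forall>j\<in>{1..r}. lookup M (k + j) < q"
  shows "normal_mon M = M"
proof -
  have "normal_mon M = y_mon (\<lambda>j. lookup M (k + j))"
    unfolding normal_mon_def using assms(2,3) by (intro y_mon_cong) (simp add: y_exp_def)
  then show ?thesis
    using keys_subset_y_vars[OF assms(1,2)] by (simp add: y_mon_lookup)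
qed

lemma leading_mon_not_normal:
  assumes "f \<in> ideal_Sol" "f \<noteq> 0"
  shows "normal_mon (Max (keys f)) \<noteq> Max (keys f)"
proof
  let ?M0 = "Max (keys f)"
  assume normal: "normal_mon ?M0 = ?M0"
  have M0: "?M0 \<in> keys f"
    using assms(2) by simp
  have "{M \<in> keys f. normal_mon M = ?M0} = {?M0}"
  proof (intro equalityI subsetI)
    fix M assume "M \<in> {M \<in> keys f. normal_mon M = ?M0}"
    then have "?M0 \<le> M" "M \<le> ?M0"
      using normal_mon_le[of M] by auto
    then show "M \<in> {?M0}" by simp
  qed (use M0 normal in auto)
  moreover have "omega_exp ?M0 = 0"
    using normal by (metis y_mon_exps(3) normal_mon_def)
  ultimately have "lookup (normal_form f) ?M0 = lookup f ?M0"
    by (simp add: lookup_normal_form)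
  with M0 normal_form_eq_0[OF assms(1)] show False
    by (simp add: in_keys_iff)
qed

lemma lead_term_constraint_poly:
  "t \<in> {1..k} \<Longrightarrow> lead_term (constraint_poly \<omega> k r \<alpha> A t) = single (single t 1) 1"
  unfolding constraint_poly_eq by (intro lead_term_binomial less_single_mon) (auto simp: lookup_y_mon)

lemma lead_term_domain_poly: "lead_term (Var i ^ q - 1) = single (single i q) 1"
  unfolding domain_poly_eq by (intro lead_term_binomial less_single_mon) (use q_pos in auto)

lemma multiple_of_lead_term_in_lead_ideal:
  assumes "g \<in> gens" "lead_term g = single L 1" "keys (M + L) \<subseteq> {1..k+r}"
  shows "single (M + L) c \<in> gen_ideal {1..k+r} (lead_term ` gens)"
proof -
  have "single (M + L) c = single M c * lead_term g"
    by (simp add: assms(2) mult_single)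
  also have "\<dots> \<in> gen_ideal {1..k+r} (lead_term ` gens)"
    using assms(3)
    by (intro gen_ideal_mult[OF _ gen_ideal_generator[OF imageI[OF assms(1)]]] vars_in_single)
      (auto simp: keys_add_mon)
  finally show ?thesis .
qed

lemma lead_term_in_lead_ideal:
  assumes "f \<in> ideal_Sol" "f \<noteq> 0"
  shows "lead_term f \<in> gen_ideal {1..k+r} (lead_term ` gens)"
proof -
  let ?M0 = "Max (keys f)"
  have keys: "keys ?M0 \<subseteq> {1..k+r}"
    using assms by (auto simp: vanishing_ideal_def vars_in_def)
  have lead: "lead_term f = single ?M0 (lookup f ?M0)"
    by (rule lead_term_eq_Max[OF assms(2)])
  from leading_mon_not_normal[OF assms] normal_mon_eq_self[OF keys]
  consider (x) t where "t \<in> {1..k}" "1 \<le> lookup ?M0 t" | (y) j where "j \<in> {1..r}" "q \<le> lookup ?M0 (k + j)"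
    by (force simp: not_less)
  then show ?thesis
  proof cases
    case x
    then have "?M0 = (?M0 - single t 1) + single t 1"
      by (simp add: diff_single_add_single)
    then show ?thesis
      using multiple_of_lead_term_in_lead_ideal[OF constraint_poly_in_gens lead_term_constraint_poly]
        x(1) keys lead by metis
  next
    case y
    then have "?M0 = (?M0 - single (k + j) q) + single (k + j) q"
      by (simp add: diff_single_add_single)
    then show ?thesis
      using multiple_of_lead_term_in_lead_ideal[OF domain_poly_in_gens lead_term_domain_poly]
        y(1) keys lead by metis
  qed
qed

end

theorem lemma5p4:
  fixes p m q k r :: nat and \<omega> :: complex and \<alpha> :: "nat \<Rightarrow> nat" and A :: "nat \<Rightarrow> nat \<Rightarrow> nat"
  assumes "prime p" and "m \<ge> 1" and "q = p ^ m"
    and "\<omega> ^ q = 1" and "\<forall>n. 0 < n \<and> n < q \<longrightarrow> \<omega> ^ n \<noteq> 1"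
    and "\<forall>t\<in>{1..k}. \<alpha> t < q \<and> (\<forall>j\<in>{1..r}. A t j < q)"
  shows "CSP_ideal q \<omega> k r \<alpha> A = vanishing_ideal {1..k+r} (Sol q \<omega> k r \<alpha> A)
    \<and> is_groebner_basis {1..k+r} (G' q \<omega> k r \<alpha> A) (vanishing_ideal {1..k+r} (Sol q \<omega> k r \<alpha> A))
    \<and> gen_ideal {1..k+r} (G' q \<omega> k r \<alpha> A) = vanishing_ideal {1..k+r} (Sol q \<omega> k r \<alpha> A)"
proof -
  have "q > 0"
    using assms(1,3) by (simp add: prime_gt_0_nat)
  then interpret csp_instance q k r \<omega> \<alpha> A
    using assms(4,5) by unfold_locales
  have ideal_G_eq: "ideal_G = ideal_Sol"
    using ideal_G_subset_ideal_Sol ideal_Sol_subset_ideal_G by (rule subset_antisym)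
  have "CSP_ideal q \<omega> k r \<alpha> A = ideal_Sol"
  proof
    show "CSP_ideal q \<omega> k r \<alpha> A \<subseteq> ideal_Sol"
      unfolding CSP_ideal_def
      using domain_poly_vanishing constraint_poly_vanishing by (intro gen_ideal_subset_vanishing_ideal) blast
    have "gens \<subseteq> (\<lambda>i. Var i ^ q - 1) ` {1..k+r} \<union> constraint_poly \<omega> k r \<alpha> A ` {1..k}"
      unfolding G'_def by force
    then show "ideal_Sol \<subseteq> CSP_ideal q \<omega> k r \<alpha> A"
      unfolding CSP_ideal_def ideal_G_eq[symmetric] by (rule gen_ideal_mono)
  qed
  moreover have "is_groebner_basis {1..k+r} gens ideal_Sol"
    using ideal_G_eq lead_term_in_lead_ideal
    by (intro is_groebner_basisI) (auto simp: G'_def intro: gen_ideal_generator)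
  ultimately show ?thesis
    using ideal_G_eq by simp
qed

end
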